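(* Let $G:\mathbb{R}^2\to\mathbb{R}$ and constants $L\ge c>0$ satisfy, for all $u,u_0,v\in\mathbb{R}$, $|G(u,v)-G(u_0,v)|\le L|u-u_0|$ and $|G(u,v)|\ge c\sqrt{u^2+v^2}$. Let $n,m\ge1$, fix $i\in\{1,\dots,n\}$, and let $f\in L^2((0,1)^n)$ (not a.e. constant) and $h\in L^2((0,1)^{n+m-1})$ be real-valued. Suppose $g:(0,1)^{n+m}\to\mathbb{R}$ belongs to $L^2((0,1)^{n+m})$, satisfies $g(x,\xi)=G(f(x),h(x_{\sim i},\xi))$, and has mean $g_0=0$. Then $$S^g_{T_{x_i}}\le 2\frac{L^2}{c^2}\,\frac{\mathrm{Var}(f)}{\mathrm{Var}(f)+\mathrm{Var}(h)}\,S^f_{T_{x_i}}.$$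
   Context: All integrals are with respect to Lebesgue measure over unit cubes (inputs independent, uniform on $[0,1]$). $x_{\sim i}=(x_1,\dots,x_{i-1},x_{i+1},\dots,x_n)$. For $\varphi$, $\varphi_0=\int\varphi$ and $\mathrm{Var}(\varphi)=\int\varphi^2-\varphi_0^2$. The total Sobol index of $x_i$ for a square-integrable $\varphi$ of $(x,y)$ is $$S^\varphi_{T_{x_i}}=\frac{\int\varphi^2\,dx\,dy-\int\big(\int\varphi\,dx_i\big)^2dx_{\sim i}\,dy}{\mathrm{Var}(\varphi)}.$$ *)

theory Defs
  imports "HOL-Probability.Probability"
begin

definition unif :: "real measure" where
  "unif = uniform_measure lborel {0<..<1}"

definition cube :: "'a set \<Rightarrow> ('a \<Rightarrow> real) measure" where
  "cube I = PiM I (\<lambda>_. unif)"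

definition mean :: "'a set \<Rightarrow> (('a \<Rightarrow> real) \<Rightarrow> real) \<Rightarrow> real" where
  "mean I \<phi> = (\<integral>z. \<phi> z \<partial>cube I)"

definition var :: "'a set \<Rightarrow> (('a \<Rightarrow> real) \<Rightarrow> real) \<Rightarrow> real" where
  "var I \<phi> = (\<integral>z. (\<phi> z)^2 \<partial>cube I) - (mean I \<phi>)^2"

definition sq_int :: "'a set \<Rightarrow> (('a \<Rightarrow> real) \<Rightarrow> real) \<Rightarrow> bool" where
  "sq_int I \<phi> \<longleftrightarrow> \<phi> \<in> borel_measurable (cube I) \<and> integrable (cube I) (\<lambda>z. (\<phi> z)^2)"

definition total_sobol :: "'a set \<Rightarrow> (('a \<Rightarrow> real) \<Rightarrow> real) \<Rightarrow> 'a \<Rightarrow> real" where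
  "total_sobol I \<phi> k =
     ((\<integral>z. (\<phi> z)^2 \<partial>cube I)
      - (\<integral>z. (\<integral>t. \<phi> (z(k := t)) \<partial>unif)^2 \<partial>cube (I - {k}))) / var I \<phi>"

text \<open>Index set of (x, xi): x_1..x_n as Inl 0..n-1, xi_1..xi_m as Inr 0..m-1.\<close>
definition gidx :: "nat \<Rightarrow> nat \<Rightarrow> (nat + nat) set" where
  "gidx n m = Inl ` {..<n} \<union> Inr ` {..<m}"

definition hidx :: "nat \<Rightarrow> nat \<Rightarrow> nat \<Rightarrow> (nat + nat) set" where
  "hidx n m i = Inl ` ({..<n} - {i}) \<union> Inr ` {..<m}"

end

theory Submission
  imports Defs
begin

text \<open>Freeze every input except x_i. Then g is t \<mapsto> G (f_t) v, where f_t is the section of f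
  in x_i and v = h(x_{~i}, xi) does not depend on t. As G is L-Lipschitz in its first argument,
  |g - G m v| \<le> L |f_t - m| for the mean m of the section, and since the variance minimises the
  mean square deviation from a constant, the variance of g in x_i alone is at most L^2 times that
  of f. Integrating over the frozen inputs bounds the numerator of the total index of g by L^2
  times that of f. For the denominator, g has mean zero, so
  Var g = E g^2 \<ge> c^2 (E f^2 + E h^2) \<ge> c^2 (Var f + Var h). The bound holds even without the
  factor 2.\<close>

lemma space_unif [simp]: "space unif = UNIV"
  by (simp add: unif_def)

lemma sets_unif [simp]: "sets unif = sets borel"
  by (simp add: unif_def)

lemma prob_space_unif: "prob_space unif"
  unfolding unif_def by (rule prob_space_uniform_measure) auto

interpretation unif: prob_space unif
  by (rule prob_space_unif)

lemma product_sigma_finite_unif: "product_sigma_finite (\<lambda>_. unif)"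
  unfolding product_sigma_finite_def using unif.sigma_finite_measure by simp

lemma prob_space_cube: "prob_space (cube I)"
  unfolding cube_def by (rule prob_space_PiM) (rule prob_space_unif)

lemma space_cube: "space (cube I) = PiE I (\<lambda>_. UNIV)"
  by (simp add: cube_def space_PiM)

lemma pair_sigma_finite_cube_unif: "pair_sigma_finite (cube I) unif"
  unfolding pair_sigma_finite_def
  using prob_space_imp_sigma_finite[OF prob_space_cube] unif.sigma_finite_measure by simp

lemma distr_cube_insert:
  assumes "finite J" and "k \<notin> J"
  shows "distr (cube J \<Otimes>\<^sub>M unif) (cube (insert k J)) (\<lambda>(z, t). z(k := t)) = cube (insert k J)"
    (is "distr _ _ ?upd = _")
proof -
  interpret product_sigma_finite "\<lambda>_. unif" by (rule product_sigma_finite_unif)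
  interpret J: finite_product_sigma_finite "\<lambda>_. unif" J by standard (rule assms(1))
  show ?thesis unfolding cube_def
  proof (rule PiM_eqI)
    fix A assume A: "\<And>i. i \<in> insert k J \<Longrightarrow> A i \<in> sets unif"
    have "?upd -` PiE (insert k J) A \<inter> space (PiM J (\<lambda>_. unif) \<Otimes>\<^sub>M unif) = PiE J A \<times> A k"
      using assms(2)
      by (auto simp: space_pair_measure space_PiM PiE_iff extensional_def split: if_splits)
    then have "emeasure (distr (PiM J (\<lambda>_. unif) \<Otimes>\<^sub>M unif) (PiM (insert k J) (\<lambda>_. unif)) ?upd)
        (PiE (insert k J) A) = emeasure (PiM J (\<lambda>_. unif) \<Otimes>\<^sub>M unif) (PiE J A \<times> A k)"
      using A assms(1) by (subst emeasure_distr)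
        (auto intro!: sets_PiM_I_finite measurable_add_dim[of k J "\<lambda>_. unif", simplified])
    also have "\<dots> = emeasure (PiM J (\<lambda>_. unif)) (PiE J A) * emeasure unif (A k)"
      using A assms(1) by (intro unif.emeasure_pair_measure_Times) (auto intro!: sets_PiM_I_finite)
    also have "\<dots> = (\<Prod>i\<in>insert k J. emeasure unif (A i))"
      using A assms by (simp add: J.measure_times mult.commute)
    finally show "emeasure (distr (PiM J (\<lambda>_. unif) \<Otimes>\<^sub>M unif) (PiM (insert k J) (\<lambda>_. unif)) ?upd)
        (PiE (insert k J) A) = (\<Prod>i\<in>insert k J. emeasure unif (A i))" .
  qed (use assms in simp_all)
qed

lemma distr_cube_fun_upd:
  "finite I \<Longrightarrow> k \<in> I \<Longrightarrow> distr (cube (I - {k}) \<Otimes>\<^sub>M unif) (cube I) (\<lambda>(z, t). z(k := t)) = cube I"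
  using distr_cube_insert[of "I - {k}" k] by (simp add: insert_absorb)

lemma measurable_cube_fun_upd:
  "k \<in> I \<Longrightarrow> (\<lambda>(z, t). z(k := t)) \<in> measurable (cube (I - {k}) \<Otimes>\<^sub>M unif) (cube I)"
  using measurable_add_dim[of k "I - {k}" "\<lambda>_. unif"] by (simp add: cube_def insert_absorb)

lemma AE_cube_section:
  assumes "finite I" and "k \<in> I" and "AE z in cube I. Q z"
  shows "AE z in cube (I - {k}). AE t in unif. Q (z(k := t))"
proof -
  interpret pair_sigma_finite "cube (I - {k})" unif by (rule pair_sigma_finite_cube_unif)
  have "AE x in cube (I - {k}) \<Otimes>\<^sub>M unif. Q ((\<lambda>(z, t). z(k := t)) x)"
    by (rule AE_distrD[OF measurable_cube_fun_upd[OF assms(2)]])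
      (subst distr_cube_fun_upd[OF assms(1,2)], rule assms(3))
  from AE_pair[OF this] show ?thesis by simp
qed

lemma
  fixes \<phi> :: "('a \<Rightarrow> real) \<Rightarrow> real"
  assumes "finite I" and "k \<in> I" and "integrable (cube I) \<phi>"
  shows AE_integrable_cube_section: "AE z in cube (I - {k}). integrable unif (\<lambda>t. \<phi> (z(k := t)))"
    and integrable_cube_section_integral:
      "integrable (cube (I - {k})) (\<lambda>z. \<integral>t. \<phi> (z(k := t)) \<partial>unif)"
    and integral_cube_section:
      "integral\<^sup>L (cube I) \<phi> = (\<integral>z. (\<integral>t. \<phi> (z(k := t)) \<partial>unif) \<partial>cube (I - {k}))"
proof -
  interpret pair_sigma_finite "cube (I - {k})" unif by (rule pair_sigma_finite_cube_unif)
  note upd = measurable_cube_fun_upd[OF assms(2)]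
  have int: "integrable (cube (I - {k}) \<Otimes>\<^sub>M unif) (\<lambda>x. \<phi> ((\<lambda>(z, t). z(k := t)) x))"
    using assms integrable_distr_eq[OF upd, of \<phi>] by (simp add: distr_cube_fun_upd)
  show "AE z in cube (I - {k}). integrable unif (\<lambda>t. \<phi> (z(k := t)))"
    using AE_integrable_fst'[OF int] by simp
  show "integrable (cube (I - {k})) (\<lambda>z. \<integral>t. \<phi> (z(k := t)) \<partial>unif)"
    using integrable_fst'[OF int] by simp
  have "integral\<^sup>L (cube I) \<phi> = (\<integral>x. \<phi> ((\<lambda>(z, t). z(k := t)) x) \<partial>(cube (I - {k}) \<Otimes>\<^sub>M unif))"
    using assms by (subst integral_distr[OF upd, symmetric]) (simp_all add: distr_cube_fun_upd)
  also have "\<dots> = (\<integral>z. (\<integral>t. \<phi> (z(k := t)) \<partial>unif) \<partial>cube (I - {k}))"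
    using integral_fst'[OF int] by simp
  finally show "integral\<^sup>L (cube I) \<phi> = (\<integral>z. (\<integral>t. \<phi> (z(k := t)) \<partial>unif) \<partial>cube (I - {k}))" .
qed

lemma measurable_cube_reindex:
  "e ` K \<subseteq> I \<Longrightarrow> (\<lambda>z. \<lambda>j\<in>K. z (e j)) \<in> measurable (cube I) (cube K)"
  unfolding cube_def
  by (intro measurable_restrict)
    (auto intro!: measurable_component_singleton[of _ I "\<lambda>_. unif", simplified])

lemma distr_cube_reindex:
  assumes "finite I" and "finite K" and "inj_on e K" and "e ` K \<subseteq> I"
  shows "distr (cube I) (cube K) (\<lambda>z. \<lambda>j\<in>K. z (e j)) = cube K"
    (is "distr _ _ ?r = _")
proof -
  interpret product_sigma_finite "\<lambda>_. unif" by (rule product_sigma_finite_unif)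
  interpret I: finite_product_sigma_finite "\<lambda>_. unif" I by standard (rule assms(1))
  show ?thesis unfolding cube_def
  proof (rule PiM_eqI)
    fix A assume A: "\<And>i. i \<in> K \<Longrightarrow> A i \<in> sets unif"
    define A' where "A' x = (if x \<in> e ` K then A (the_inv_into K e x) else UNIV)" for x
    have A'e: "A' (e j) = A j" if "j \<in> K" for j
      using that assms(3) by (simp add: A'_def the_inv_into_f_f)
    have "?r -` PiE K A \<inter> space (PiM I (\<lambda>_. unif)) = PiE I A'"
    proof (intro set_eqI iffI)
      fix z assume "z \<in> PiE I A'"
      then show "z \<in> ?r -` PiE K A \<inter> space (PiM I (\<lambda>_. unif))"
        using assms(4) A'e by (auto simp: PiE_iff space_PiM)
    qed (use assms(3) in \<open>auto simp: space_PiM PiE_iff A'_def the_inv_into_f_f\<close>)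
    then have "emeasure (distr (PiM I (\<lambda>_. unif)) (PiM K (\<lambda>_. unif)) ?r) (PiE K A)
        = emeasure (PiM I (\<lambda>_. unif)) (PiE I A')"
      using A assms(2) measurable_cube_reindex[OF assms(4)]
      by (subst emeasure_distr) (auto simp: cube_def intro!: sets_PiM_I_finite)
    also have "\<dots> = (\<Prod>x\<in>I. emeasure unif (A' x))"
      using A assms(3) by (intro I.measure_times) (auto simp: A'_def the_inv_into_f_f)
    also have "\<dots> = (\<Prod>x\<in>e ` K. emeasure unif (A' x))"
      using assms(1,4) unif.emeasure_space_1 by (intro prod.mono_neutral_right) (auto simp: A'_def)
    also have "\<dots> = (\<Prod>j\<in>K. emeasure unif (A j))"
      using assms(3) by (simp add: prod.reindex A'e)
    finally show "emeasure (distr (PiM I (\<lambda>_. unif)) (PiM K (\<lambda>_. unif)) ?r) (PiE K A)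
        = (\<Prod>j\<in>K. emeasure unif (A j))" .
  qed (use assms in simp_all)
qed

lemma integral_cube_reindex:
  fixes \<psi> :: "_ \<Rightarrow> real"
  assumes "finite I" and "finite K" and "inj_on e K" and "e ` K \<subseteq> I"
    and "\<psi> \<in> borel_measurable (cube K)"
  shows "integral\<^sup>L (cube K) \<psi> = (\<integral>z. \<psi> (\<lambda>j\<in>K. z (e j)) \<partial>cube I)"
  using integral_distr[OF measurable_cube_reindex[OF assms(4)] assms(5)]
  by (simp add: distr_cube_reindex[OF assms(1-4)])

lemma integrable_cube_reindex:
  fixes \<psi> :: "_ \<Rightarrow> real"
  assumes "finite I" and "finite K" and "inj_on e K" and "e ` K \<subseteq> I"
    and "integrable (cube K) \<psi>"
  shows "integrable (cube I) (\<lambda>z. \<psi> (\<lambda>j\<in>K. z (e j)))"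
  using integrable_distr_eq[OF measurable_cube_reindex[OF assms(4)], of \<psi>] assms(5)
  by (simp add: distr_cube_reindex[OF assms(1-4)])

lemma AE_cube_reindex:
  assumes "finite I" and "finite K" and "inj_on e K" and "e ` K \<subseteq> I"
    and "AE y in cube K. Q y"
  shows "AE z in cube I. Q (\<lambda>j\<in>K. z (e j))"
  by (rule AE_distrD[OF measurable_cube_reindex[OF assms(4)]])
    (subst distr_cube_reindex[OF assms(1-4)], rule assms(5))

lemma square_integrable_cube:
  fixes \<phi> :: "_ \<Rightarrow> real"
  assumes "sq_int I \<phi>"
  shows "integrable (cube I) \<phi>" and "integrable (cube I) (\<lambda>z. (\<phi> z)^2)"
proof -
  interpret prob_space "cube I" by (rule prob_space_cube)
  show sq: "integrable (cube I) (\<lambda>z. (\<phi> z)^2)"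
    using assms by (simp add: sq_int_def)
  show "integrable (cube I) \<phi>"
    using assms by (intro square_integrable_imp_integrable[OF _ sq]) (simp add: sq_int_def)
qed

lemma square_cube_reindex:
  fixes \<psi> :: "_ \<Rightarrow> real"
  assumes "finite I" and "finite K" and "inj_on e K" and "e ` K \<subseteq> I" and "sq_int K \<psi>"
  shows "integrable (cube I) (\<lambda>z. (\<psi> (\<lambda>j\<in>K. z (e j)))^2)"
    and "(\<integral>y. (\<psi> y)^2 \<partial>cube K) = (\<integral>z. (\<psi> (\<lambda>j\<in>K. z (e j)))^2 \<partial>cube I)"
proof -
  note sq = square_integrable_cube(2)[OF assms(5)]
  show "integrable (cube I) (\<lambda>z. (\<psi> (\<lambda>j\<in>K. z (e j)))^2)"
    using integrable_cube_reindex[OF assms(1-4) sq] by simp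
  show "(\<integral>y. (\<psi> y)^2 \<partial>cube K) = (\<integral>z. (\<psi> (\<lambda>j\<in>K. z (e j)))^2 \<partial>cube I)"
    using integral_cube_reindex[OF assms(1-4) borel_measurable_integrable[OF sq]] by simp
qed

lemma var_cube_eq_variance:
  assumes "sq_int I \<phi>"
  shows "var I \<phi> = prob_space.variance (cube I) \<phi>"
  using prob_space.variance_eq[OF prob_space_cube square_integrable_cube[OF assms]]
  by (simp add: var_def mean_def)

lemma var_cube_nonneg: "sq_int I \<phi> \<Longrightarrow> 0 \<le> var I \<phi>"
  by (simp add: var_cube_eq_variance prob_space.variance_positive[OF prob_space_cube])

lemma var_cube_pos:
  assumes "sq_int I \<phi>" and "\<not> (\<exists>a. AE z in cube I. \<phi> z = a)"
  shows "0 < var I \<phi>"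
proof (rule ccontr)
  interpret prob_space "cube I" by (rule prob_space_cube)
  assume "\<not> 0 < var I \<phi>"
  then have "variance \<phi> = 0"
    using assms(1) var_cube_eq_variance variance_positive[of \<phi>] by fastforce
  moreover have "integrable (cube I) (\<lambda>z. (\<phi> z - expectation \<phi>)^2)"
    using square_integrable_cube[OF assms(1)] by (simp add: power2_diff)
  ultimately have "AE z in cube I. (\<phi> z - expectation \<phi>)^2 = 0"
    by (subst integral_nonneg_eq_0_iff_AE[symmetric]) auto
  then have "AE z in cube I. \<phi> z = expectation \<phi>"
    by eventually_elim simp
  with assms(2) show False by blast
qed

lemma (in prob_space) variance_lipschitz_comp_le:
  fixes a b :: "'a \<Rightarrow> real" and F :: "real \<Rightarrow> real"
  assumes "integrable M a" and "integrable M (\<lambda>x. (a x)^2)"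
    and "integrable M b" and "integrable M (\<lambda>x. (b x)^2)"
    and "0 \<le> L" and "\<And>u u0. \<bar>F u - F u0\<bar> \<le> L * \<bar>u - u0\<bar>"
    and "AE x in M. a x = F (b x)"
  shows "expectation (\<lambda>x. (a x)^2) - (expectation a)^2
    \<le> L^2 * (expectation (\<lambda>x. (b x)^2) - (expectation b)^2)"
proof -
  define \<beta> where "\<beta> = expectation b"
  define B where "B = F \<beta>"
  \<comment> \<open>the variance of a is at most its mean square deviation from any constant, here B\<close>
  have dev_a: "expectation (\<lambda>x. (a x - B)^2)
      = expectation (\<lambda>x. (a x)^2) - (expectation a)^2 + (expectation a - B)^2"
    using assms(1,2) by (simp add: power2_diff prob_space)
  have dev_b: "expectation (\<lambda>x. (L * (b x - \<beta>))^2)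
      = L^2 * (expectation (\<lambda>x. (b x)^2) - (expectation b)^2)"
    using variance_eq[OF assms(3,4)] by (simp add: \<beta>_def power_mult_distrib)
  have "expectation (\<lambda>x. (a x - B)^2) \<le> expectation (\<lambda>x. (L * (b x - \<beta>))^2)"
  proof (rule integral_mono_AE)
    show "AE x in M. (a x - B)^2 \<le> (L * (b x - \<beta>))^2"
      using assms(7)
    proof eventually_elim
      case (elim x)
      then have "\<bar>a x - B\<bar> \<le> \<bar>L * (b x - \<beta>)\<bar>"
        using assms(5,6) by (simp add: B_def abs_mult)
      then show ?case
        by (simp add: abs_le_square_iff)
    qed
  qed (use assms(1-4) in \<open>simp_all add: power2_diff power_mult_distrib\<close>)
  then show ?thesis
    using dev_a dev_b zero_le_power2[of "expectation a - B"] by linarith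
qed

definition cond_var :: "(('a \<Rightarrow> real) \<Rightarrow> real) \<Rightarrow> 'a \<Rightarrow> ('a \<Rightarrow> real) \<Rightarrow> real" where
  "cond_var \<phi> k z = (\<integral>t. (\<phi> (z(k := t)))^2 \<partial>unif) - (\<integral>t. \<phi> (z(k := t)) \<partial>unif)^2"

lemma AE_square_integrable_cube_section:
  fixes \<phi> :: "_ \<Rightarrow> real"
  assumes "finite I" and "k \<in> I" and "sq_int I \<phi>"
  shows "AE z in cube (I - {k}).
    integrable unif (\<lambda>t. \<phi> (z(k := t))) \<and> integrable unif (\<lambda>t. (\<phi> (z(k := t)))^2)"
  using square_integrable_cube[OF assms(3)]
  by (auto intro: eventually_conj AE_integrable_cube_section[OF assms(1,2)])

lemma AE_cond_var_nonneg:
  assumes "finite I" and "k \<in> I" and "sq_int I \<phi>"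
  shows "AE z in cube (I - {k}). 0 \<le> cond_var \<phi> k z"
  using AE_square_integrable_cube_section[OF assms]
proof eventually_elim
  case (elim z)
  then show ?case
    using unif.variance_eq[of "\<lambda>t. \<phi> (z(k := t))"]
      unif.variance_positive[of "\<lambda>t. \<phi> (z(k := t))"]
    by (simp add: cond_var_def)
qed

lemma
  assumes "finite I" and "k \<in> I" and "sq_int I \<phi>"
  shows integrable_cond_var: "integrable (cube (I - {k})) (cond_var \<phi> k)"
    and total_sobol_cond_var:
      "total_sobol I \<phi> k = (\<integral>z. cond_var \<phi> k z \<partial>cube (I - {k})) / var I \<phi>"
proof -
  note sq = square_integrable_cube[OF assms(3)]
  define S where "S z = (\<integral>t. (\<phi> (z(k := t)))^2 \<partial>unif)" for z
  define E where "E z = (\<integral>t. \<phi> (z(k := t)) \<partial>unif)" for z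
  have S: "integrable (cube (I - {k})) S"
    unfolding S_def by (rule integrable_cube_section_integral[OF assms(1,2) sq(2)])
  have E: "integrable (cube (I - {k})) E"
    unfolding E_def by (rule integrable_cube_section_integral[OF assms(1,2) sq(1)])
  have E2: "integrable (cube (I - {k})) (\<lambda>z. (E z)^2)"
  proof (rule Bochner_Integration.integrable_bound[OF S])
    show "(\<lambda>z. (E z)^2) \<in> borel_measurable (cube (I - {k}))"
      using borel_measurable_integrable[OF E] by measurable
    show "AE z in cube (I - {k}). norm ((E z)^2) \<le> norm (S z)"
      using AE_cond_var_nonneg[OF assms] by eventually_elim (auto simp: cond_var_def S_def E_def)
  qed
  have cv: "cond_var \<phi> k = (\<lambda>z. S z - (E z)^2)"
    by (simp add: fun_eq_iff cond_var_def S_def E_def)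
  show "integrable (cube (I - {k})) (cond_var \<phi> k)"
    unfolding cv using S E2 by simp
  have "(\<integral>z. (\<phi> z)^2 \<partial>cube I) = integral\<^sup>L (cube (I - {k})) S"
    unfolding S_def by (rule integral_cube_section[OF assms(1,2) sq(2)])
  then show "total_sobol I \<phi> k = (\<integral>z. cond_var \<phi> k z \<partial>cube (I - {k})) / var I \<phi>"
    unfolding total_sobol_def cv using S E2 by (simp add: E_def)
qed

lemma integral_cond_var_composite_le:
  fixes G :: "real \<Rightarrow> real \<Rightarrow> real" and f :: "(nat \<Rightarrow> real) \<Rightarrow> real"
    and g h :: "(nat + nat \<Rightarrow> real) \<Rightarrow> real"
  assumes "0 \<le> L" and "\<And>u u0 v. \<bar>G u v - G u0 v\<bar> \<le> L * \<bar>u - u0\<bar>" and "i < n"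
    and "sq_int {..<n} f" and "sq_int (gidx n m) g"
    and "AE z in cube (gidx n m). g z = G (f (\<lambda>j. z (Inl j))) (h (restrict z (hidx n m i)))"
  shows "(\<integral>z. cond_var g (Inl i) z \<partial>cube (gidx n m - {Inl i}))
    \<le> L^2 * (\<integral>y. cond_var f i y \<partial>cube ({..<n} - {i}))"
proof -
  define J where "J = gidx n m - {Inl i}"
  define T where "T z = (\<lambda>j\<in>{..<n} - {i}. z (Inl j))" for z :: "nat + nat \<Rightarrow> real"
  have fin: "finite (gidx n m)" "finite J" "finite ({..<n} - {i})" "finite {..<n}"
    by (simp_all add: J_def gidx_def)
  have i: "Inl i \<in> gidx n m" "i \<in> {..<n}"
    using assms(3) by (auto simp: gidx_def)
  have T: "inj_on Inl ({..<n} - {i})" "Inl ` ({..<n} - {i}) \<subseteq> J"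
    by (auto simp: J_def gidx_def)
  have slice: "(\<lambda>j. (z(Inl i := t)) (Inl j)) = (T z)(i := t)"
    "restrict (z(Inl i := t)) (hidx n m i) = restrict z (hidx n m i)"
    if "z \<in> space (cube J)" for z t
    using that assms(3)
    by (auto simp: T_def J_def space_cube gidx_def hidx_def PiE_iff extensional_def fun_eq_iff)
  have "AE z in cube J. cond_var g (Inl i) z \<le> L^2 * cond_var f i (T z)"
    using AE_cube_section[OF fin(1) i(1) assms(6)]
      AE_square_integrable_cube_section[OF fin(1) i(1) assms(5)]
      AE_cube_reindex[OF fin(2,3) T AE_square_integrable_cube_section[OF fin(4) i(2) assms(4)]]
      AE_space
    unfolding J_def[symmetric] T_def[symmetric]
  proof eventually_elim
    case (elim z)
    define v where "v = h (restrict z (hidx n m i))"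
    have "AE t in unif. g (z(Inl i := t)) = G (f ((T z)(i := t))) v"
      using elim(1) slice[OF elim(4)] by (simp add: v_def)
    then show ?case
      using elim(2,3) assms(1,2) unfolding cond_var_def
      by (intro unif.variance_lipschitz_comp_le[where F = "\<lambda>u. G u v"]) simp_all
  qed
  then have "(\<integral>z. cond_var g (Inl i) z \<partial>cube J) \<le> (\<integral>z. L^2 * cond_var f i (T z) \<partial>cube J)"
    using integrable_cond_var[OF fin(1) i(1) assms(5)]
      integrable_cube_reindex[OF fin(2,3) T integrable_cond_var[OF fin(4) i(2) assms(4)]]
    by (intro integral_mono_AE) (simp_all add: J_def T_def)
  also have "\<dots> = L^2 * (\<integral>y. cond_var f i y \<partial>cube ({..<n} - {i}))"
    using integral_cube_reindex[OF fin(2,3) T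
        borel_measurable_integrable[OF integrable_cond_var[OF fin(4) i(2) assms(4)]]]
    by (simp add: T_def)
  finally show ?thesis
    unfolding J_def .
qed

lemma square_le_of_norm_le:
  fixes c u v w :: real
  assumes "0 \<le> c" and "c * sqrt (u^2 + v^2) \<le> \<bar>w\<bar>"
  shows "c^2 * (u^2 + v^2) \<le> w^2"
proof -
  have "(c * sqrt (u^2 + v^2))^2 \<le> \<bar>w\<bar>^2"
    using assms by (intro power_mono) simp_all
  then show ?thesis
    by (simp add: power_mult_distrib)
qed

lemma var_composite_ge:
  fixes G :: "real \<Rightarrow> real \<Rightarrow> real" and f :: "(nat \<Rightarrow> real) \<Rightarrow> real"
    and g h :: "(nat + nat \<Rightarrow> real) \<Rightarrow> real"
  assumes "0 \<le> c" and "\<And>u v. c * sqrt (u^2 + v^2) \<le> \<bar>G u v\<bar>"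
    and "sq_int {..<n} f" and "sq_int (hidx n m i) h" and "sq_int (gidx n m) g"
    and "AE z in cube (gidx n m). g z = G (f (\<lambda>j. z (Inl j))) (h (restrict z (hidx n m i)))"
    and "mean (gidx n m) g = 0"
  shows "c^2 * (var {..<n} f + var (hidx n m i) h) \<le> var (gidx n m) g"
proof -
  define I where "I = gidx n m"
  define H where "H = hidx n m i"
  have fin: "finite I" "finite {..<n}" "finite H"
    by (simp_all add: I_def H_def gidx_def hidx_def)
  have F: "inj_on Inl {..<n}" "Inl ` {..<n} \<subseteq> I" and Hs: "inj_on id H" "id ` H \<subseteq> I"
    by (auto simp: I_def H_def gidx_def hidx_def)
  note f_I = square_cube_reindex[OF fin(1,2) F assms(3)]
  note h_I = square_cube_reindex[OF fin(1,3) Hs assms(4)[folded H_def]]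
  have "c^2 * (var {..<n} f + var H h)
      \<le> c^2 * ((\<integral>x. (f x)^2 \<partial>cube {..<n}) + (\<integral>y. (h y)^2 \<partial>cube H))"
    using assms(1) by (intro mult_left_mono) (simp_all add: var_def)
  also have "\<dots> = (\<integral>z. c^2 * ((f (\<lambda>j\<in>{..<n}. z (Inl j)))^2 + (h (restrict z H))^2) \<partial>cube I)"
    using f_I h_I by simp
  also have "\<dots> \<le> (\<integral>z. (g z)^2 \<partial>cube I)"
  proof (rule integral_mono_AE)
    show "AE z in cube I.
        c^2 * ((f (\<lambda>j\<in>{..<n}. z (Inl j)))^2 + (h (restrict z H))^2) \<le> (g z)^2"
      using assms(6) AE_space unfolding I_def[symmetric] H_def[symmetric]
    proof eventually_elim
      case (elim z)
      have "(\<lambda>j. z (Inl j)) = (\<lambda>j\<in>{..<n}. z (Inl j))"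
        using elim(2) by (auto simp: I_def space_cube gidx_def PiE_iff extensional_def fun_eq_iff)
      then show ?case
        using elim(1) square_le_of_norm_le[OF assms(1,2)] by simp
    qed
  qed (use f_I h_I assms(5) in \<open>simp_all add: I_def square_integrable_cube\<close>)
  also have "\<dots> = var I g"
    using assms(7) by (simp add: var_def I_def)
  finally show ?thesis
    unfolding I_def H_def .
qed

theorem theoremD4:
  fixes G :: "real \<Rightarrow> real \<Rightarrow> real" and L c :: real and n m i :: nat
    and f :: "(nat \<Rightarrow> real) \<Rightarrow> real" and h g :: "(nat + nat \<Rightarrow> real) \<Rightarrow> real"
  assumes "0 < c" and "c \<le> L"
    and "\<forall>u u0 v. \<bar>G u v - G u0 v\<bar> \<le> L * \<bar>u - u0\<bar>"
    and "\<forall>u v. c * sqrt (u^2 + v^2) \<le> \<bar>G u v\<bar>"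
    and "1 \<le> n" and "1 \<le> m" and "i < n"
    and "sq_int {..<n} f" and "\<not> (\<exists>a. AE x in cube {..<n}. f x = a)"
    and "sq_int (hidx n m i) h"
    and "sq_int (gidx n m) g"
    and "AE z in cube (gidx n m). g z = G (f (\<lambda>j. z (Inl j))) (h (restrict z (hidx n m i)))"
    and "mean (gidx n m) g = 0"
  shows "total_sobol (gidx n m) g (Inl i)
           \<le> 2 * L^2 / c^2 * (var {..<n} f / (var {..<n} f + var (hidx n m i) h))
               * total_sobol {..<n} f i"
proof -
  define Ng where "Ng = (\<integral>z. cond_var g (Inl i) z \<partial>cube (gidx n m - {Inl i}))"
  define Nf where "Nf = (\<integral>y. cond_var f i y \<partial>cube ({..<n} - {i}))"
  define vf vh where "vf = var {..<n} f" and "vh = var (hidx n m i) h"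
  have fin: "finite (gidx n m)" "Inl i \<in> gidx n m" "finite {..<n}" "i \<in> {..<n}"
    using assms(7) by (auto simp: gidx_def)
  have "0 \<le> Nf"
    unfolding Nf_def by (rule integral_nonneg_AE[OF AE_cond_var_nonneg[OF fin(3,4) assms(8)]])
  moreover have "Ng \<le> L^2 * Nf"
    unfolding Ng_def Nf_def using assms by (intro integral_cond_var_composite_le) auto
  ultimately have num: "Ng \<le> 2 * L^2 * Nf"
    using mult_nonneg_nonneg[OF zero_le_power2[of L] \<open>0 \<le> Nf\<close>] by linarith
  have den: "c^2 * (vf + vh) \<le> var (gidx n m) g"
    unfolding vf_def vh_def using assms by (intro var_composite_ge) auto
  have "0 < vf" "0 \<le> vh"
    unfolding vf_def vh_def using assms(8-10) by (simp_all add: var_cube_pos var_cube_nonneg)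
  then have "Ng / var (gidx n m) g \<le> 2 * L^2 * Nf / (c^2 * (vf + vh))"
    using num den assms(1) \<open>0 \<le> Nf\<close> by (intro frac_le) simp_all
  also have "\<dots> = 2 * L^2 / c^2 * (vf / (vf + vh)) * (Nf / vf)"
    using \<open>0 < vf\<close> \<open>0 \<le> vh\<close> assms(1) by (simp add: field_simps)
  finally show ?thesis
    using total_sobol_cond_var[OF fin(1,2) assms(11)] total_sobol_cond_var[OF fin(3,4) assms(8)]
    by (simp add: Ng_def Nf_def vf_def vh_def)
qed

end
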